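(* Fix $F\in\mathcal S^\sharp$ with its $\gamma$, and let $C>0$. Let $t<0$ with $|t|\le C$, $s=x+iy$ with $y>0$ and $|x|\le Cy^{1/4}$, and let $n$ be an integer with $1\le n\le\exp(y^{3/5}/|t|)$. Put $\mathcal I(z):=\gamma(z)e^{\frac{1}{|t|}(J_t(s)-z)^2}n^{-z}$. There exist $y_0,K>0$ depending only on $C,F,\gamma$ such that for all such $t,s,n$ with $y\ge y_0$: (i) if $|x-\Re z|\le y^{3/5}$ and $\tfrac12y^{2/3}\le|y-\Im z|\le2y^{2/3}$, then $|\mathcal I(z)|\le K\exp\!\left(-\frac{y^{4/3}}{10|t|}\right)$; (ii) if $\Re z=2$ and $|y-\Im z|\ge y^{2/3}$, then $|\mathcal I(z)|\le K\exp\!\left(-\frac{1}{2|t|}(y-\Im z)^2\right)$.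
   Context: $\operatorname{Log}$ denotes the principal branch of the logarithm. The extended Selberg class $\mathcal S^\sharp$ is the set of functions $F$, not identically zero, such that: (i) $F(s)=\sum_{n\ge1}a_n n^{-s}$, with the series converging absolutely for $\Re s>1$; (ii) $(s-1)^mF(s)$ extends to an entire function of finite order for some integer $m\ge0$; (iii) letting $m$ be the order of the pole of $F$ at $s=1$ ($m=0$ if there is no pole), there is a function $\gamma(s)=\alpha s^m(s-1)^mQ^s\prod_{i=1}^k\Gamma(\omega_i s+\mu_i)$ with $\alpha\in\mathbb C\setminus\{0\}$, $Q>0$, an integer $k\ge1$, $\omega_i>0$ and $\mu_i\in\mathbb C$ with $\Re\mu_i\ge0$, such that the (entire) function $\xi^F(s):=\gamma(s)F(s)$ satisfies $\xi^F(s)=\overline{\xi^F(1-\bar s)}$ for all $s$. For $t<0$ and $\Im s>0$: $J_t(s):=s+\frac{|t|}{2}\log Q+\frac{|t|}{2}\sum_{i=1}^k\omega_i\operatorname{Log}(\omega_i s)$. *)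

theory Defs
  imports "HOL-Analysis.Analysis"
begin

definition gamma_factor ::
  "complex \<Rightarrow> nat \<Rightarrow> real \<Rightarrow> nat \<Rightarrow> (nat \<Rightarrow> real) \<Rightarrow> (nat \<Rightarrow> complex) \<Rightarrow> complex \<Rightarrow> complex"
  where "gamma_factor \<alpha> m Q k \<omega> \<mu> s =
     \<alpha> * s ^ m * (s - 1) ^ m * (complex_of_real Q) powr s *
     (\<Prod>i<k. Gamma (complex_of_real (\<omega> i) * s + \<mu> i))"

definition gamma_pole :: "nat \<Rightarrow> (nat \<Rightarrow> real) \<Rightarrow> (nat \<Rightarrow> complex) \<Rightarrow> complex \<Rightarrow> bool"
  where "gamma_pole k \<omega> \<mu> s \<longleftrightarrow>
     (\<exists>i<k. complex_of_real (\<omega> i) * s + \<mu> i \<in> \<int>\<^sub>\<le>\<^sub>0)"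

definition finite_order_entire :: "(complex \<Rightarrow> complex) \<Rightarrow> bool"
  where "finite_order_entire G \<longleftrightarrow> G holomorphic_on UNIV \<and>
     (\<exists>\<rho> R. \<forall>z. norm z \<ge> R \<longrightarrow> norm (G z) \<le> exp (norm z powr \<rho>))"

text \<open>F belongs to the extended Selberg class, with Dirichlet coefficients a (a (Suc n') is a_n
  for n = n'+1), pole order m at s = 1, and gamma factor given by (alpha, Q, k, omega, mu).
  The value of F at the point s = 1 is irrelevant.\<close>
definition selberg_sharp ::
  "(complex \<Rightarrow> complex) \<Rightarrow> (nat \<Rightarrow> complex) \<Rightarrow> nat \<Rightarrow> complex \<Rightarrow> real \<Rightarrow> nat \<Rightarrow>
   (nat \<Rightarrow> real) \<Rightarrow> (nat \<Rightarrow> complex) \<Rightarrow> bool"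
  where "selberg_sharp F a m \<alpha> Q k \<omega> \<mu> \<longleftrightarrow>
     (\<exists>s. s \<noteq> 1 \<and> F s \<noteq> 0) \<and>
     (\<forall>s. 1 < Re s \<longrightarrow>
         summable (\<lambda>n. norm (a (Suc n) / of_nat (Suc n) powr s)) \<and>
         F s = (\<Sum>n. a (Suc n) / of_nat (Suc n) powr s)) \<and>
     (\<exists>G. finite_order_entire G \<and> (\<forall>s. s \<noteq> 1 \<longrightarrow> G s = (s - 1) ^ m * F s) \<and>
          (m = 0 \<or> G 1 \<noteq> 0)) \<and>
     \<alpha> \<noteq> 0 \<and> Q > 0 \<and> k \<ge> 1 \<and> (\<forall>i<k. \<omega> i > 0 \<and> Re (\<mu> i) \<ge> 0) \<and>
     (\<exists>\<xi>. \<xi> holomorphic_on UNIV \<and>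
          (\<forall>s. s \<noteq> 1 \<and> \<not> gamma_pole k \<omega> \<mu> s \<longrightarrow> \<xi> s = gamma_factor \<alpha> m Q k \<omega> \<mu> s * F s) \<and>
          (\<forall>s. \<xi> s = cnj (\<xi> (1 - cnj s))))"

definition J_fun :: "real \<Rightarrow> nat \<Rightarrow> (nat \<Rightarrow> real) \<Rightarrow> real \<Rightarrow> complex \<Rightarrow> complex"
  where "J_fun Q k \<omega> t s = s + of_real (\<bar>t\<bar> / 2 * ln Q) +
     of_real (\<bar>t\<bar> / 2) * (\<Sum>i<k. of_real (\<omega> i) * Ln (of_real (\<omega> i) * s))"

definition integrand ::
  "complex \<Rightarrow> nat \<Rightarrow> real \<Rightarrow> nat \<Rightarrow> (nat \<Rightarrow> real) \<Rightarrow> (nat \<Rightarrow> complex) \<Rightarrow>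
   real \<Rightarrow> complex \<Rightarrow> nat \<Rightarrow> complex \<Rightarrow> complex"
  where "integrand \<alpha> m Q k \<omega> \<mu> t s n z =
     gamma_factor \<alpha> m Q k \<omega> \<mu> z * exp ((J_fun Q k \<omega> t s - z)\<^sup>2 / of_real \<bar>t\<bar>) *
     (of_nat n) powr (- z)"

end

theory Submission
  imports Defs "HOL-Real_Asymp.Real_Asymp"
begin

text \<open>
  Write J_t(s) = s + |t|/2 L(s) with L = J_shift = O(log y). Then the real part of
  (J_t(s) - z)^2/|t| is ((x - Re z)^2 - (y - Im z)^2)/|t| up to O(|s - z| log y + log^2 y),
  so the Gaussian factor decays like exp(-(y - Im z)^2/|t|), and everything else only has to be
  shown to be of lower order.
  (i) Above its poles the gamma factor has order one, log |gamma(z)| = O(|z| log |z|) = O(y log y),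
  because Gamma grows polynomially in vertical strips away from the real axis; n^(-z) costs at most
  |Re z| y^(3/5)/|t| and (x - Re z)^2 <= y^(6/5), all negligible against (y - Im z)^2 >= y^(4/3)/4.
  (ii) On Re z = 2 one has |Gamma(w)| <= Gamma(Re w), so gamma grows only polynomially and n^(-z) is
  bounded; the remaining terms are at most linear in d = |y - Im z| >= y^(2/3) and are absorbed by
  half of the Gaussian decay -d^2/|t|.
\<close>

lemma norm_Gamma_le_Gamma_Re:
  fixes w :: complex
  assumes "0 < Re w"
  shows "norm (Gamma w) \<le> Gamma (Re w)"
proof -
  have "norm (Gamma w) \<le> Gamma (Re w) \<bullet> 1"
  proof (rule has_integral_norm_bound_integral_component)
    show "((\<lambda>t. of_real t powr (w - 1) / of_real (exp t)) has_integral Gamma w) {0..}"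
      using Gamma_integral_complex assms by blast
    show "((\<lambda>t. t powr (Re w - 1) / exp t) has_integral Gamma (Re w)) {0..}"
      using Gamma_integral_real assms by blast
  qed (auto simp: norm_divide norm_powr_real_powr)
  then show ?thesis by simp
qed

lemma not_nonpos_Ints_if_Im_nonzero: "Im (w :: complex) \<noteq> 0 \<Longrightarrow> w \<notin> \<int>\<^sub>\<le>\<^sub>0"
  by (auto elim!: nonpos_Ints_cases)

lemma Gamma_bounded_left_of_line:
  obtains b :: real where "\<And>w::complex. 1 \<le> \<bar>Im w\<bar> \<Longrightarrow> Re w \<le> 2 \<Longrightarrow> norm (Gamma w) \<le> b"
proof -
  have "continuous_on {1..2::real} Gamma"
    by (rule continuous_on_Gamma) (auto elim!: nonpos_Ints_cases)
  then have "bounded (Gamma ` {1..2::real})"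
    by (intro compact_imp_bounded compact_continuous_image) auto
  then obtain b where b: "\<And>x::real. x \<in> {1..2} \<Longrightarrow> norm (Gamma x) \<le> b"
    by (meson bounded_iff imageI)
  have "norm (Gamma w) \<le> b" if "1 \<le> \<bar>Im w\<bar>" "1 - real M \<le> Re w" "Re w \<le> 2" for M w
    using that
  proof (induction M arbitrary: w)
    case 0
    then have "norm (Gamma w) \<le> Gamma (Re w)" by (intro norm_Gamma_le_Gamma_Re) auto
    also have "\<dots> \<le> b" using b[of "Re w"] 0 by auto
    finally show ?case .
  next
    case (Suc M)
    show ?case
    proof (cases "1 - real M \<le> Re w")
      case True
      then show ?thesis using Suc by blast
    next
      case False
      have "1 \<le> norm w" using Suc.prems(1) abs_Im_le_cmod order_trans by blast
      then have "norm (Gamma w) \<le> norm w * norm (Gamma w)"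
        by (simp add: mult_le_cancel_right1)
      also have "\<dots> = norm (Gamma (w + 1))"
        using Suc.prems by (simp add: Gamma_plus1 not_nonpos_Ints_if_Im_nonzero norm_mult)
      also have "\<dots> \<le> b" using Suc False by (intro Suc.IH) auto
      finally show ?thesis .
    qed
  qed
  moreover have "1 - real (nat \<lceil>1 - Re w\<rceil>) \<le> Re w" for w :: complex
    by linarith
  ultimately show ?thesis using that by blast
qed

lemma norm_Gamma_le_power_off_real_axis:
  obtains B :: real where "1 \<le> B"
    "\<And>w::complex. 1 \<le> \<bar>Im w\<bar> \<Longrightarrow> norm (Gamma w) \<le> B * (1 + norm w) ^ nat \<lceil>Re w\<rceil>"
proof -
  obtain b where b: "\<And>w::complex. 1 \<le> \<bar>Im w\<bar> \<Longrightarrow> Re w \<le> 2 \<Longrightarrow> norm (Gamma w) \<le> b"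
    using Gamma_bounded_left_of_line by blast
  define B where "B = max b 1"
  have "norm (Gamma w) \<le> B * (1 + norm w) ^ N" if "1 \<le> \<bar>Im w\<bar>" "Re w \<le> 2 + real N" for N w
    using that
  proof (induction N arbitrary: w)
    case 0
    then show ?case using b[of w] by (simp add: B_def)
  next
    case (Suc N)
    show ?case
    proof (cases "Re w \<le> 2 + real N")
      case True
      then have "norm (Gamma w) \<le> B * (1 + norm w) ^ N" using Suc by blast
      also have "\<dots> \<le> B * (1 + norm w) ^ Suc N"
        by (intro mult_left_mono power_increasing) (auto simp: B_def)
      finally show ?thesis .
    next
      case False
      have "(Re w - 1)\<^sup>2 \<le> (Re w)\<^sup>2"
        using False by (simp add: power2_eq_square algebra_simps)
      then have shift: "norm (w - 1) \<le> norm w"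
        unfolding cmod_def by (intro real_sqrt_le_mono) simp
      have "norm (Gamma w) = norm (w - 1) * norm (Gamma (w - 1))"
        using Gamma_plus1[of "w - 1"] Suc.prems
        by (simp add: not_nonpos_Ints_if_Im_nonzero norm_mult)
      also have "\<dots> \<le> (1 + norm w) * (B * (1 + norm w) ^ N)"
      proof (rule mult_mono)
        have "norm (Gamma (w - 1)) \<le> B * (1 + norm (w - 1)) ^ N"
          using Suc by (intro Suc.IH) auto
        also have "\<dots> \<le> B * (1 + norm w) ^ N"
          using shift by (intro mult_left_mono power_mono) (auto simp: B_def)
        finally show "norm (Gamma (w - 1)) \<le> B * (1 + norm w) ^ N" .
      qed (use shift in auto)
      finally show ?thesis by (simp add: mult.left_commute)
    qed
  qed
  moreover have "Re w \<le> 2 + real (nat \<lceil>Re w\<rceil>)" for w :: complex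
    by linarith
  ultimately show ?thesis using that[of B] by (simp add: B_def)
qed

definition lin_log :: "real \<Rightarrow> real"
  where "lin_log r = (1 + r) * ln (3 + r)"

lemma one_le_ln_three_plus: "0 \<le> (r::real) \<Longrightarrow> 1 \<le> ln (3 + r)"
  using ln3_gt_1 ln_le_cancel_iff[of 3 "3 + r"] by linarith

lemma one_plus_le_lin_log: "0 \<le> r \<Longrightarrow> 1 + r \<le> lin_log r"
  unfolding lin_log_def using one_le_ln_three_plus[of r] by (simp add: mult_le_cancel_left1)

lemma lin_log_nonneg: "0 \<le> r \<Longrightarrow> 0 \<le> lin_log r"
  using one_plus_le_lin_log[of r] by linarith

lemma lin_log_mono: "0 \<le> r \<Longrightarrow> r \<le> r' \<Longrightarrow> lin_log r \<le> lin_log r'"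
  unfolding lin_log_def by (intro mult_mono) auto

lemma lin_log_affine:
  assumes "1 \<le> c" "0 \<le> r" "0 \<le> \<rho>" "1 + \<rho> \<le> c * (1 + r)"
  shows "lin_log \<rho> \<le> c * (1 + ln (3 * c)) * lin_log r"
proof -
  have ln3r: "1 \<le> ln (3 + r)" using assms(2) by (rule one_le_ln_three_plus)
  have "1 \<le> c * (1 + r)"
    using mult_mono[of 1 c 1 "1 + r"] assms by simp
  then have "3 + \<rho> \<le> 3 * c * (1 + r)"
    using assms(4) by linarith
  then have "ln (3 + \<rho>) \<le> ln (3 * c * (1 + r))"
    using assms by simp
  also have "\<dots> = ln (3 * c) + ln (1 + r)"
    using assms by (simp add: ln_mult)
  also have "\<dots> \<le> (1 + ln (3 * c)) * ln (3 + r)"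
  proof -
    have "ln (3 * c) \<le> ln (3 * c) * ln (3 + r)"
      using ln3r assms(1) by (intro mult_le_cancel_left1[THEN iffD2]) simp
    moreover have "ln (1 + r) \<le> ln (3 + r)" using assms(2) by simp
    ultimately show ?thesis by (simp add: algebra_simps)
  qed
  finally have "(1 + \<rho>) * ln (3 + \<rho>) \<le> c * (1 + r) * ((1 + ln (3 * c)) * ln (3 + r))"
    using assms by (intro mult_mono) auto
  then show ?thesis by (simp add: lin_log_def algebra_simps)
qed

lemma norm_Gamma_le_lin_log_off_real_axis:
  obtains B :: real where "1 \<le> B"
    "\<And>w::complex. 1 \<le> \<bar>Im w\<bar> \<Longrightarrow> norm (Gamma w) \<le> B * exp (lin_log (norm w))"
proof -
  obtain B where B: "1 \<le> B"
    "\<And>w::complex. 1 \<le> \<bar>Im w\<bar> \<Longrightarrow> norm (Gamma w) \<le> B * (1 + norm w) ^ nat \<lceil>Re w\<rceil>"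
    using norm_Gamma_le_power_off_real_axis by blast
  have "(1 + norm w) ^ nat \<lceil>Re w\<rceil> \<le> exp (lin_log (norm w))" for w :: complex
  proof -
    have "real (nat \<lceil>Re w\<rceil>) \<le> 1 + norm w"
      using complex_Re_le_cmod[of w] ceiling_correct[of "Re w"] by (cases "0 \<le> Re w") auto
    then have "real (nat \<lceil>Re w\<rceil>) * ln (1 + norm w) \<le> (1 + norm w) * ln (3 + norm w)"
      by (intro mult_mono) (auto simp: add_pos_nonneg)
    moreover have "(1 + norm w) ^ nat \<lceil>Re w\<rceil> = exp (real (nat \<lceil>Re w\<rceil>) * ln (1 + norm w))"
      by (simp add: exp_of_nat_mult add_pos_nonneg)
    ultimately show ?thesis
      by (simp add: lin_log_def)
  qed
  then show ?thesis
    using that[OF B(1)] B(2) by (meson B(1) mult_left_mono order_trans zero_le_one)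
qed

lemma norm_Gamma_affine_le_lin_log:
  obtains B :: real where "1 \<le> B"
    "\<And>(\<omega>::real) \<mu> z. 0 < \<omega> \<Longrightarrow> 1 + norm \<mu> \<le> \<omega> * Im z \<Longrightarrow>
       norm (Gamma (of_real \<omega> * z + \<mu>)) \<le>
       B * exp ((1 + \<omega> + norm \<mu>) * (1 + ln (3 * (1 + \<omega> + norm \<mu>))) * lin_log (norm z))"
proof -
  obtain B where B: "1 \<le> B"
    "\<And>w::complex. 1 \<le> \<bar>Im w\<bar> \<Longrightarrow> norm (Gamma w) \<le> B * exp (lin_log (norm w))"
    using norm_Gamma_le_lin_log_off_real_axis by blast
  have "norm (Gamma (of_real \<omega> * z + \<mu>)) \<le>
      B * exp ((1 + \<omega> + norm \<mu>) * (1 + ln (3 * (1 + \<omega> + norm \<mu>))) * lin_log (norm z))"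
    if \<omega>: "0 < \<omega>" and Im_z: "1 + norm \<mu> \<le> \<omega> * Im z" for \<omega> :: real and \<mu> z
  proof -
    define w where "w = of_real \<omega> * z + \<mu>"
    have "1 \<le> \<bar>Im w\<bar>"
      using Im_z abs_Im_le_cmod[of \<mu>] by (simp add: w_def)
    then have "norm (Gamma w) \<le> B * exp (lin_log (norm w))" by (rule B(2))
    also have "lin_log (norm w) \<le> (1 + \<omega> + norm \<mu>) * (1 + ln (3 * (1 + \<omega> + norm \<mu>))) * lin_log (norm z)"
    proof (rule lin_log_affine)
      have "norm w \<le> \<omega> * norm z + norm \<mu>"
        using norm_triangle_ineq[of "of_real \<omega> * z" \<mu>] \<omega> by (simp add: w_def norm_mult)
      moreover have "(1 + \<omega> + norm \<mu>) * (1 + norm z) =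
          1 + (\<omega> * norm z + norm \<mu>) + (\<omega> + norm z + norm \<mu> * norm z)"
        by (simp add: algebra_simps)
      ultimately show "1 + norm w \<le> (1 + \<omega> + norm \<mu>) * (1 + norm z)"
        using \<omega> norm_ge_zero[of z] mult_nonneg_nonneg[OF norm_ge_zero[of \<mu>] norm_ge_zero[of z]]
        by linarith
    qed (use \<omega> in auto)
    finally show ?thesis using B(1) by (simp add: w_def)
  qed
  with B(1) show ?thesis using that by blast
qed

lemma norm_gamma_factor:
  assumes "0 < Q"
  shows "norm (gamma_factor \<alpha> m Q k \<omega> \<mu> z) = norm \<alpha> * norm z ^ m * norm (z - 1) ^ m *
    Q powr Re z * (\<Prod>i<k. norm (Gamma (of_real (\<omega> i) * z + \<mu> i)))"
  using assms by (simp add: gamma_factor_def norm_mult norm_power norm_powr_real_powr prod_norm)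

lemma norm_gamma_factor_le_Re_pos:
  assumes "0 < Q" "\<forall>i<k. 0 < \<omega> i \<and> 0 \<le> Re (\<mu> i)" "0 < Re z"
  shows "norm (gamma_factor \<alpha> m Q k \<omega> \<mu> z) \<le> norm \<alpha> * (1 + norm z) ^ (2 * m) *
    Q powr Re z * (\<Prod>i<k. Gamma (\<omega> i * Re z + Re (\<mu> i)))"
proof -
  have "norm z ^ m * norm (z - 1) ^ m \<le> (1 + norm z) ^ m * (1 + norm z) ^ m"
    using norm_triangle_ineq4[of z 1] by (intro mult_mono power_mono) auto
  then have "norm \<alpha> * (norm z ^ m * norm (z - 1) ^ m) * Q powr Re z
      \<le> norm \<alpha> * ((1 + norm z) ^ m * (1 + norm z) ^ m) * Q powr Re z"
    by (intro mult_right_mono mult_left_mono) auto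
  moreover have "(\<Prod>i<k. norm (Gamma (of_real (\<omega> i) * z + \<mu> i)))
      \<le> (\<Prod>i<k. Gamma (\<omega> i * Re z + Re (\<mu> i)))"
  proof (intro prod_mono conjI norm_ge_zero)
    fix i assume "i \<in> {..<k}"
    then have "0 < Re (of_real (\<omega> i) * z + \<mu> i)"
      using assms(2,3) by (simp add: add_pos_nonneg)
    then show "norm (Gamma (of_real (\<omega> i) * z + \<mu> i)) \<le> Gamma (\<omega> i * Re z + Re (\<mu> i))"
      using norm_Gamma_le_Gamma_Re by fastforce
  qed
  ultimately have "norm \<alpha> * (norm z ^ m * norm (z - 1) ^ m) * Q powr Re z *
      (\<Prod>i<k. norm (Gamma (of_real (\<omega> i) * z + \<mu> i))) \<le> norm \<alpha> *
      ((1 + norm z) ^ m * (1 + norm z) ^ m) * Q powr Re z * (\<Prod>i<k. Gamma (\<omega> i * Re z + Re (\<mu> i)))"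
    by (rule mult_mono) (auto intro!: prod_nonneg)
  then show ?thesis
    by (simp add: norm_gamma_factor[OF assms(1)] mult_2 power_add mult.assoc)
qed

lemma norm_gamma_factor_le_exp_on_vertical_line:
  assumes "0 < Q" "\<forall>i<k. 0 < \<omega> i \<and> 0 \<le> Re (\<mu> i)" "0 < \<sigma>"
  obtains c where
    "\<And>z. Re z = \<sigma> \<Longrightarrow> norm (gamma_factor \<alpha> m Q k \<omega> \<mu> z) \<le> exp (c + 2 * real m * norm z)"
proof -
  define c where "c = norm \<alpha> * Q powr \<sigma> * (\<Prod>i<k. Gamma (\<omega> i * \<sigma> + Re (\<mu> i)))"
  have "0 \<le> c" unfolding c_def using assms(2,3)
    by (intro mult_nonneg_nonneg prod_nonneg ballI less_imp_le[OF Gamma_real_pos])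
      (auto intro: add_pos_nonneg)
  have "norm (gamma_factor \<alpha> m Q k \<omega> \<mu> z) \<le> exp (c + 2 * real m * norm z)" if "Re z = \<sigma>" for z
  proof -
    have "norm (gamma_factor \<alpha> m Q k \<omega> \<mu> z) \<le> c * (1 + norm z) ^ (2 * m)"
      using norm_gamma_factor_le_Re_pos[OF assms(1,2), of z \<alpha> m] that assms(3)
      by (simp add: c_def mult_ac)
    also have "\<dots> \<le> exp c * exp (norm z) ^ (2 * m)"
      using \<open>0 \<le> c\<close> by (intro mult_mono power_mono) (auto intro: less_imp_le[OF exp_gt_self])
    also have "\<dots> = exp (c + 2 * real m * norm z)"
      by (simp add: exp_add[symmetric] exp_of_nat_mult[symmetric] algebra_simps)
    finally show ?thesis .
  qed
  then show ?thesis using that by blast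
qed

lemma prod_norm_Gamma_affine_le_lin_log:
  fixes k :: nat and \<omega> :: "nat \<Rightarrow> real"
  assumes "\<forall>i<k. 0 < \<omega> i"
  obtains K Y :: real where "0 \<le> K"
    "\<And>z. Y \<le> Im z \<Longrightarrow>
       (\<Prod>i<k. norm (Gamma (of_real (\<omega> i) * z + \<mu> i))) \<le> K * exp (K * lin_log (norm z))"
proof -
  obtain B where B: "1 \<le> B"
    "\<And>(\<omega>::real) \<mu> z. 0 < \<omega> \<Longrightarrow> 1 + norm \<mu> \<le> \<omega> * Im z \<Longrightarrow>
       norm (Gamma (of_real \<omega> * z + \<mu>)) \<le>
       B * exp ((1 + \<omega> + norm \<mu>) * (1 + ln (3 * (1 + \<omega> + norm \<mu>))) * lin_log (norm z))"
    using norm_Gamma_affine_le_lin_log by blast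
  define c where "c i = (1 + \<omega> i + norm (\<mu> i)) * (1 + ln (3 * (1 + \<omega> i + norm (\<mu> i))))" for i
  define Y where "Y = (\<Sum>i<k. (1 + norm (\<mu> i)) / \<omega> i)"
  have c: "0 \<le> c i" if "i < k" for i
    using assms that unfolding c_def by (intro mult_nonneg_nonneg add_nonneg_nonneg ln_ge_zero) auto
  have K: "0 \<le> B ^ k + (\<Sum>i<k. c i)" using B(1) c by (intro add_nonneg_nonneg sum_nonneg) auto
  have "(\<Prod>i<k. norm (Gamma (of_real (\<omega> i) * z + \<mu> i))) \<le>
      (B ^ k + (\<Sum>i<k. c i)) * exp ((B ^ k + (\<Sum>i<k. c i)) * lin_log (norm z))"
    if z: "Y \<le> Im z" for z
  proof -
    have "norm (Gamma (of_real (\<omega> i) * z + \<mu> i)) \<le> B * exp (c i * lin_log (norm z))"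
      if i: "i < k" for i
    proof -
      have "(1 + norm (\<mu> i)) / \<omega> i \<le> Y"
        unfolding Y_def using i assms by (intro member_le_sum) auto
      then have "1 + norm (\<mu> i) \<le> \<omega> i * Y"
        using assms i by (simp add: pos_divide_le_eq mult.commute)
      also have "\<dots> \<le> \<omega> i * Im z"
        using z assms i by (intro mult_left_mono) auto
      finally show ?thesis using B(2)[of "\<omega> i"] assms i by (simp add: c_def)
    qed
    then have "(\<Prod>i<k. norm (Gamma (of_real (\<omega> i) * z + \<mu> i))) \<le>
        (\<Prod>i<k. B * exp (c i * lin_log (norm z)))"
      by (intro prod_mono) auto
    also have "\<dots> = B ^ k * exp ((\<Sum>i<k. c i) * lin_log (norm z))"
      by (simp add: prod.distrib exp_sum sum_distrib_right)
    also have "\<dots> \<le> (B ^ k + (\<Sum>i<k. c i)) * exp ((B ^ k + (\<Sum>i<k. c i)) * lin_log (norm z))"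
      using B(1) c K lin_log_nonneg[of "norm z"]
      by (intro mult_mono) (auto intro!: mult_right_mono sum_nonneg)
    finally show ?thesis .
  qed
  with K show ?thesis using that by blast
qed

lemma norm_power_mult_le_exp_lin_log:
  fixes z :: complex
  shows "norm z ^ m * norm (z - 1) ^ m \<le> exp (2 * real m * lin_log (norm z))"
proof -
  have "norm z ^ m * norm (z - 1) ^ m \<le> (1 + norm z) ^ m * (1 + norm z) ^ m"
    using norm_triangle_ineq4[of z 1] by (intro mult_mono power_mono) auto
  also have "\<dots> \<le> exp (norm z) ^ m * exp (norm z) ^ m"
    by (intro mult_mono power_mono exp_ge_add_one_self) auto
  also have "\<dots> = exp (2 * real m * norm z)"
    by (simp add: exp_of_nat_mult[symmetric] exp_add[symmetric] algebra_simps)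
  also have "\<dots> \<le> exp (2 * real m * lin_log (norm z))"
    using one_plus_le_lin_log[of "norm z"] by (simp add: mult_left_mono)
  finally show ?thesis .
qed

lemma powr_Re_le_exp_lin_log:
  assumes "0 < Q"
  shows "Q powr Re z \<le> exp (\<bar>ln Q\<bar> * lin_log (norm z))"
proof -
  have "Re z * ln Q \<le> \<bar>ln Q\<bar> * \<bar>Re z\<bar>" by (metis abs_ge_self abs_mult mult.commute)
  also have "\<dots> \<le> \<bar>ln Q\<bar> * lin_log (norm z)"
    using abs_Re_le_cmod[of z] one_plus_le_lin_log[of "norm z"] by (intro mult_left_mono) auto
  finally show ?thesis using assms by (simp add: powr_def)
qed

lemma norm_gamma_factor_le_order_one:
  assumes "0 < Q" "\<forall>i<k. 0 < \<omega> i"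
  obtains K Y :: real where "0 < K"
    "\<And>z. Y \<le> Im z \<Longrightarrow> norm (gamma_factor \<alpha> m Q k \<omega> \<mu> z) \<le> K * exp (K * lin_log (norm z))"
proof -
  obtain K\<^sub>\<Gamma> Y where K\<^sub>\<Gamma>: "0 \<le> K\<^sub>\<Gamma>"
    "\<And>z. Y \<le> Im z \<Longrightarrow>
       (\<Prod>i<k. norm (Gamma (of_real (\<omega> i) * z + \<mu> i))) \<le> K\<^sub>\<Gamma> * exp (K\<^sub>\<Gamma> * lin_log (norm z))"
    using prod_norm_Gamma_affine_le_lin_log[OF assms(2)] by blast
  define \<kappa> where "\<kappa> = 2 * real m + \<bar>ln Q\<bar> + K\<^sub>\<Gamma>"
  define K where "K = 1 + norm \<alpha> * K\<^sub>\<Gamma> + \<kappa>"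
  have "norm (gamma_factor \<alpha> m Q k \<omega> \<mu> z) \<le> K * exp (K * lin_log (norm z))" if "Y \<le> Im z" for z
  proof -
    have "norm (gamma_factor \<alpha> m Q k \<omega> \<mu> z) \<le> norm \<alpha> * exp (2 * real m * lin_log (norm z)) *
        exp (\<bar>ln Q\<bar> * lin_log (norm z)) * (K\<^sub>\<Gamma> * exp (K\<^sub>\<Gamma> * lin_log (norm z)))"
      unfolding norm_gamma_factor[OF assms(1)] mult.assoc[of _ "norm z ^ m"]
      using norm_power_mult_le_exp_lin_log powr_Re_le_exp_lin_log[OF assms(1)] K\<^sub>\<Gamma>(2)[OF that]
      by (intro mult_mono mult_left_mono) (auto intro!: prod_nonneg)
    also have "\<dots> = norm \<alpha> * K\<^sub>\<Gamma> * exp (\<kappa> * lin_log (norm z))"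
      by (simp add: \<kappa>_def exp_add[symmetric] algebra_simps)
    also have "\<dots> \<le> K * exp (K * lin_log (norm z))"
      using K\<^sub>\<Gamma>(1) lin_log_nonneg[of "norm z"]
      by (intro mult_mono) (auto simp: K_def \<kappa>_def intro!: mult_right_mono)
    finally show ?thesis .
  qed
  moreover have "0 < K" using K\<^sub>\<Gamma>(1) by (simp add: K_def \<kappa>_def add_pos_nonneg)
  ultimately show ?thesis using that by blast
qed

definition J_shift :: "real \<Rightarrow> nat \<Rightarrow> (nat \<Rightarrow> real) \<Rightarrow> complex \<Rightarrow> complex"
  where "J_shift Q k \<omega> s = of_real (ln Q) + (\<Sum>i<k. of_real (\<omega> i) * Ln (of_real (\<omega> i) * s))"

lemma J_fun_eq: "J_fun Q k \<omega> t s = s + of_real (\<bar>t\<bar> / 2) * J_shift Q k \<omega> s"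
  by (simp add: J_fun_def J_shift_def algebra_simps)

lemma norm_Ln_le:
  assumes "1 \<le> norm v"
  shows "norm (Ln v) \<le> ln (norm v) + pi"
proof -
  have "v \<noteq> 0" using assms by auto
  have "norm (Ln v) \<le> \<bar>Re (Ln v)\<bar> + \<bar>Im (Ln v)\<bar>" by (rule cmod_le)
  also have "\<bar>Re (Ln v)\<bar> = ln (norm v)" using \<open>v \<noteq> 0\<close> assms by simp
  also have "\<bar>Im (Ln v)\<bar> \<le> pi"
    using mpi_less_Im_Ln[of v] Im_Ln_le_pi[of v] \<open>v \<noteq> 0\<close> by auto
  finally show ?thesis by simp
qed

lemma norm_J_shift_le:
  assumes "\<forall>i<k. 0 < \<omega> i \<and> 1 \<le> \<omega> i * norm s" "(\<Sum>i<k. \<omega> i) \<le> \<Lambda>" "1 \<le> \<Lambda>"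
    "norm s \<le> r" "1 \<le> r"
  shows "norm (J_shift Q k \<omega> s) \<le> \<bar>ln Q\<bar> + \<Lambda> * (ln (\<Lambda> * r) + pi)"
proof -
  have \<omega>_le: "\<omega> i \<le> \<Lambda>" if "i < k" for i
  proof -
    have "\<omega> i \<le> (\<Sum>i<k. \<omega> i)"
      using assms(1) that by (intro member_le_sum) (auto intro: less_imp_le)
    with assms(2) show ?thesis by linarith
  qed
  have "norm (of_real (\<omega> i) * Ln (of_real (\<omega> i) * s)) \<le> \<omega> i * (ln (\<Lambda> * r) + pi)"
    if "i < k" for i
  proof -
    have \<omega>i: "0 < \<omega> i" "1 \<le> \<omega> i * norm s" using assms(1) that by auto
    then have "norm (Ln (of_real (\<omega> i) * s)) \<le> ln (\<omega> i * norm s) + pi"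
      using norm_Ln_le[of "of_real (\<omega> i) * s"] by (simp add: norm_mult)
    also have "\<dots> \<le> ln (\<Lambda> * r) + pi"
      using \<omega>i assms(4) \<omega>_le[OF that] by (simp add: ln_mono mult_mono)
    finally show ?thesis using \<omega>i by (simp add: norm_mult mult_left_mono)
  qed
  then have "norm (\<Sum>i<k. of_real (\<omega> i) * Ln (of_real (\<omega> i) * s)) \<le> (\<Sum>i<k. \<omega> i) * (ln (\<Lambda> * r) + pi)"
    by (auto simp: sum_distrib_right intro!: order_trans[OF norm_sum sum_mono])
  also have "\<dots> \<le> \<Lambda> * (ln (\<Lambda> * r) + pi)"
    using assms(2,3,5) mult_mono[of 1 \<Lambda> 1 r] by (intro mult_right_mono) (auto intro!: add_nonneg_nonneg)
  finally show ?thesis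
    using norm_triangle_ineq[of "of_real (ln Q)" "\<Sum>i<k. of_real (\<omega> i) * Ln (of_real (\<omega> i) * s)"]
    by (simp add: J_shift_def)
qed

lemma norm_J_shift_le_eventually:
  assumes "\<forall>i<k. 0 < \<omega> i" "0 < C"
  shows "\<forall>\<^sub>F y in at_top. \<forall>s. Im s = y \<and> \<bar>Re s\<bar> \<le> C * y powr (1/4) \<longrightarrow>
    norm (J_shift Q k \<omega> s) \<le> y powr (1/3)"
proof -
  define \<Lambda> where "\<Lambda> = 1 + (\<Sum>i<k. \<omega> i)"
  have "0 \<le> (\<Sum>i<k. \<omega> i)" using assms(1) by (intro sum_nonneg) (simp add: less_imp_le)
  then have \<Lambda>: "1 \<le> \<Lambda>" by (simp add: \<Lambda>_def)
  have "\<forall>\<^sub>F y in at_top. \<forall>i\<in>{..<k}. 1 \<le> \<omega> i * y"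
  proof (rule eventually_ball_finite[OF finite_lessThan], intro ballI)
    fix i assume "i \<in> {..<k}"
    then have "0 < \<omega> i" using assms(1) by simp
    then show "\<forall>\<^sub>F y in at_top. 1 \<le> \<omega> i * y" by real_asymp
  qed
  moreover have "\<forall>\<^sub>F y in at_top. (1::real) \<le> y" by (rule eventually_ge_at_top)
  moreover have "\<forall>\<^sub>F y in at_top. \<bar>ln Q\<bar> + \<Lambda> * (ln (\<Lambda> * (C * y powr (1/4) + y)) + pi) \<le> y powr (1/3)"
    using \<Lambda> assms(2) by real_asymp
  ultimately show ?thesis
  proof eventually_elim
    case (elim y)
    show ?case
    proof (intro allI impI)
      fix s assume s: "Im s = y \<and> \<bar>Re s\<bar> \<le> C * y powr (1/4)"
      have "y \<le> norm s" using abs_Im_le_cmod[of s] s by simp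
      moreover have "norm s \<le> C * y powr (1/4) + y"
        using cmod_le[of s] s elim by simp
      ultimately have "norm (J_shift Q k \<omega> s) \<le> \<bar>ln Q\<bar> + \<Lambda> * (ln (\<Lambda> * (C * y powr (1/4) + y)) + pi)"
        using elim assms(1) \<Lambda>
        by (intro norm_J_shift_le) (auto simp: \<Lambda>_def intro: order_trans mult_left_mono)
      then show "norm (J_shift Q k \<omega> s) \<le> y powr (1/3)" using elim by linarith
    qed
  qed
qed

lemma Re_J_fun_square_le:
  assumes "t < 0" "norm (J_shift Q k \<omega> s) \<le> L"
  shows "Re ((J_fun Q k \<omega> t s - z)\<^sup>2 / of_real \<bar>t\<bar>) \<le>
    ((Re s - Re z)\<^sup>2 - (Im s - Im z)\<^sup>2) / \<bar>t\<bar> + norm (s - z) * L + \<bar>t\<bar> * L\<^sup>2 / 4"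
proof -
  define \<tau> where "\<tau> = \<bar>t\<bar>"
  define \<Lambda> where "\<Lambda> = J_shift Q k \<omega> s"
  have "\<tau> > 0" using assms(1) by (simp add: \<tau>_def)
  then have "(J_fun Q k \<omega> t s - z)\<^sup>2 / of_real \<tau> =
      (s - z)\<^sup>2 / of_real \<tau> + (s - z) * \<Lambda> + of_real (\<tau> / 4) * \<Lambda>\<^sup>2"
    by (simp add: J_fun_eq \<Lambda>_def \<tau>_def field_simps power2_eq_square)
  then have "Re ((J_fun Q k \<omega> t s - z)\<^sup>2 / of_real \<tau>) =
      Re ((s - z)\<^sup>2 / of_real \<tau>) + Re ((s - z) * \<Lambda>) + Re (of_real (\<tau> / 4) * \<Lambda>\<^sup>2)"
    by (metis plus_complex.sel(1))
  moreover have "Re ((s - z)\<^sup>2 / of_real \<tau>) = ((Re s - Re z)\<^sup>2 - (Im s - Im z)\<^sup>2) / \<tau>"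
    by (simp add: Re_divide_of_real Re_power2)
  moreover have "Re ((s - z) * \<Lambda>) \<le> norm (s - z) * L"
    using complex_Re_le_cmod[of "(s - z) * \<Lambda>"] assms(2)
    by (simp only: \<Lambda>_def norm_mult) (meson mult_left_mono norm_ge_zero order_trans)
  moreover have "Re (of_real (\<tau> / 4) * \<Lambda>\<^sup>2) \<le> \<tau> * L\<^sup>2 / 4"
  proof -
    have "Re (\<Lambda>\<^sup>2) \<le> L\<^sup>2"
      using complex_Re_le_cmod[of "\<Lambda>\<^sup>2"] power_mono[OF assms(2), of 2]
      by (simp add: \<Lambda>_def norm_power)
    then show ?thesis using \<open>\<tau> > 0\<close> by simp
  qed
  ultimately show ?thesis unfolding \<tau>_def by linarith
qed

lemma norm_integrand_le:
  assumes "t < 0" "0 < n" "norm (J_shift Q k \<omega> s) \<le> L"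
  shows "norm (integrand \<alpha> m Q k \<omega> \<mu> t s n z) \<le> norm (gamma_factor \<alpha> m Q k \<omega> \<mu> z) *
    exp (((Re s - Re z)\<^sup>2 - (Im s - Im z)\<^sup>2) / \<bar>t\<bar> + norm (s - z) * L + \<bar>t\<bar> * L\<^sup>2 / 4 - Re z * ln n)"
proof -
  have "norm ((of_nat n :: complex) powr (- z)) = exp (- Re z * ln n)"
    using assms(2) by (simp add: norm_powr_real_powr powr_def)
  then have "norm (integrand \<alpha> m Q k \<omega> \<mu> t s n z) = norm (gamma_factor \<alpha> m Q k \<omega> \<mu> z) *
      exp (Re ((J_fun Q k \<omega> t s - z)\<^sup>2 / of_real \<bar>t\<bar>) - Re z * ln n)"
    by (simp add: integrand_def norm_mult norm_exp_eq_Re exp_diff exp_minus field_simps)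
  then show ?thesis
    using Re_J_fun_square_le[OF assms(1,3), of z] by (simp add: mult_left_mono)
qed

lemma norm_integrand_le_near_saddle_at:
  assumes gamma: "norm (gamma_factor \<alpha> m Q k \<omega> \<mu> z) \<le> exp G"
    and t: "t < 0" "\<bar>t\<bar> \<le> C" and n: "1 \<le> n" "ln (real n) \<le> A / \<bar>t\<bar>"
    and L: "norm (J_shift Q k \<omega> s) \<le> L" "0 \<le> L"
    and R: "\<bar>Re z\<bar> \<le> R" and D: "norm (s - z) \<le> D"
    and P: "0 \<le> P" "(Re s - Re z)\<^sup>2 - (Im s - Im z)\<^sup>2 + R * A \<le> - (3/20 * P)"
      "G + D * L + C * L\<^sup>2 / 4 \<le> P / (20 * C)"
  shows "norm (integrand \<alpha> m Q k \<omega> \<mu> t s n z) \<le> exp (- (P / (10 * \<bar>t\<bar>)))"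
proof -
  have "- Re z * ln n \<le> R * (A / \<bar>t\<bar>)"
    using R n by (intro order_trans[OF mult_right_mono[of "- Re z" "\<bar>Re z\<bar>"] mult_mono]) auto
  moreover have "norm (s - z) * L \<le> D * L" using D L(2) by (rule mult_right_mono)
  moreover have "\<bar>t\<bar> * L\<^sup>2 / 4 \<le> C * L\<^sup>2 / 4"
    using t by (intro divide_right_mono mult_right_mono) auto
  moreover have "((Re s - Re z)\<^sup>2 - (Im s - Im z)\<^sup>2) / \<bar>t\<bar> + R * (A / \<bar>t\<bar>)
      = ((Re s - Re z)\<^sup>2 - (Im s - Im z)\<^sup>2 + R * A) / \<bar>t\<bar>"
    by (simp add: add_divide_distrib)
  moreover have "\<dots> \<le> - (3/20 * P) / \<bar>t\<bar>"
    using P(2) by (intro divide_right_mono) auto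
  moreover have "P / (20 * C) \<le> P / (20 * \<bar>t\<bar>)"
    using t P(1) by (intro divide_left_mono) (auto simp: mult_pos_neg)
  moreover have "P / (20 * \<bar>t\<bar>) - (3/20 * P) / \<bar>t\<bar> = - (P / (10 * \<bar>t\<bar>))"
    by (simp add: field_simps)
  ultimately have "G + (((Re s - Re z)\<^sup>2 - (Im s - Im z)\<^sup>2) / \<bar>t\<bar> + norm (s - z) * L +
      \<bar>t\<bar> * L\<^sup>2 / 4 - Re z * ln n) \<le> - (P / (10 * \<bar>t\<bar>))"
    using P(3) by linarith
  then have "exp G * exp (((Re s - Re z)\<^sup>2 - (Im s - Im z)\<^sup>2) / \<bar>t\<bar> + norm (s - z) * L +
      \<bar>t\<bar> * L\<^sup>2 / 4 - Re z * ln n) \<le> exp (- (P / (10 * \<bar>t\<bar>)))"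
    by (simp add: exp_add[symmetric])
  moreover have "norm (integrand \<alpha> m Q k \<omega> \<mu> t s n z) \<le> exp G *
      exp (((Re s - Re z)\<^sup>2 - (Im s - Im z)\<^sup>2) / \<bar>t\<bar> + norm (s - z) * L + \<bar>t\<bar> * L\<^sup>2 / 4 - Re z * ln n)"
    using norm_integrand_le[OF t(1) _ L(1), of n \<alpha> m \<mu> z] n gamma
    by simp (meson exp_gt_zero less_imp_le mult_right_mono order_trans)
  ultimately show ?thesis by linarith
qed

lemma norm_integrand_le_near_saddle:
  assumes "0 < Q" "\<forall>i<k. 0 < \<omega> i" "0 < C"
  shows "\<forall>\<^sub>F y in at_top. \<forall>t s n z. t < 0 \<and> \<bar>t\<bar> \<le> C \<and> Im s = y \<and> \<bar>Re s\<bar> \<le> C * y powr (1/4) \<and>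
    1 \<le> n \<and> real n \<le> exp (y powr (3/5) / \<bar>t\<bar>) \<and> \<bar>Re s - Re z\<bar> \<le> y powr (3/5) \<and>
    y powr (2/3) / 2 \<le> \<bar>y - Im z\<bar> \<and> \<bar>y - Im z\<bar> \<le> 2 * y powr (2/3) \<longrightarrow>
    norm (integrand \<alpha> m Q k \<omega> \<mu> t s n z) \<le> exp (- (y powr (4/3) / (10 * \<bar>t\<bar>)))"
proof -
  obtain K Y where K: "0 < K"
    "\<And>z. Y \<le> Im z \<Longrightarrow> norm (gamma_factor \<alpha> m Q k \<omega> \<mu> z) \<le> K * exp (K * lin_log (norm z))"
    using norm_gamma_factor_le_order_one[OF assms(1,2)] by blast
  define R where "R y = C * y powr (1/4) + y powr (3/5)" for y :: real
  define Z where "Z y = R y + y + 2 * y powr (2/3)" for y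
  have "\<forall>\<^sub>F y in at_top. Y \<le> y - 2 * y powr (2/3)" by real_asymp
  moreover have "\<forall>\<^sub>F y in at_top. K + K * lin_log (Z y) + (y powr (3/5) + 2 * y powr (2/3)) * y powr (1/3)
      + C * (y powr (1/3))\<^sup>2 / 4 \<le> y powr (4/3) / (20 * C)"
    unfolding Z_def R_def lin_log_def using K(1) assms(3) by real_asymp
  moreover have "\<forall>\<^sub>F y in at_top. y powr (6/5) - y powr (4/3) / 4 + R y * y powr (3/5)
      \<le> - (3/20 * y powr (4/3))"
    unfolding R_def using assms(3) by real_asymp
  moreover have "\<forall>\<^sub>F y in at_top. \<forall>s. Im s = y \<and> \<bar>Re s\<bar> \<le> C * y powr (1/4) \<longrightarrow>
      norm (J_shift Q k \<omega> s) \<le> y powr (1/3)"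
    using assms by (intro norm_J_shift_le_eventually) auto
  moreover have "\<forall>\<^sub>F y in at_top. (0::real) \<le> y" by (rule eventually_ge_at_top)
  ultimately show ?thesis
  proof eventually_elim
    case (elim y)
    show ?case
    proof (intro allI impI, elim conjE)
      fix t :: real and s :: complex and n :: nat and z :: complex
      assume t: "t < 0" "\<bar>t\<bar> \<le> C" and s: "Im s = y" "\<bar>Re s\<bar> \<le> C * y powr (1/4)"
        and n: "1 \<le> n" "real n \<le> exp (y powr (3/5) / \<bar>t\<bar>)"
        and z: "\<bar>Re s - Re z\<bar> \<le> y powr (3/5)" "y powr (2/3) / 2 \<le> \<bar>y - Im z\<bar>"
          "\<bar>y - Im z\<bar> \<le> 2 * y powr (2/3)"
      have Re_z: "\<bar>Re z\<bar> \<le> R y" using s(2) z(1) unfolding R_def by arith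
      have "norm z \<le> Z y" using cmod_le[of z] Re_z z(3) elim(5) unfolding Z_def by arith
      then have "K * exp (K * lin_log (norm z)) \<le> exp K * exp (K * lin_log (Z y))"
        using K(1) less_imp_le[OF exp_gt_self[of K]]
        by (intro mult_mono) (auto intro!: mult_left_mono lin_log_mono)
      moreover have "Y \<le> Im z" using elim(1) z(3) by arith
      ultimately have gamma: "norm (gamma_factor \<alpha> m Q k \<omega> \<mu> z) \<le> exp (K + K * lin_log (Z y))"
        using K(2) by (simp add: exp_add) (meson order_trans)
      have "(Re s - Re z)\<^sup>2 \<le> (y powr (3/5))\<^sup>2"
        using z(1) power_mono[of "\<bar>Re s - Re z\<bar>" _ 2] by simp
      moreover have "(y powr (2/3) / 2)\<^sup>2 \<le> (Im s - Im z)\<^sup>2"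
        using z(2) s(1) power_mono[of _ "\<bar>y - Im z\<bar>" 2] by (simp add: power2_abs)
      ultimately have "(Re s - Re z)\<^sup>2 - (Im s - Im z)\<^sup>2 \<le> y powr (6/5) - y powr (4/3) / 4"
        using elim(5) by (simp add: power2_eq_square powr_add[symmetric])
      show "norm (integrand \<alpha> m Q k \<omega> \<mu> t s n z) \<le> exp (- (y powr (4/3) / (10 * \<bar>t\<bar>)))"
      proof (rule norm_integrand_le_near_saddle_at[OF gamma t n(1)])
        show "ln (real n) \<le> y powr (3/5) / \<bar>t\<bar>"
          using ln_mono[OF n(2)] n(1) by simp
        show "norm (s - z) \<le> y powr (3/5) + 2 * y powr (2/3)"
          using cmod_le[of "s - z"] s(1) z(1,3) by simp
      qed (use elim Re_z \<open>(Re s - Re z)\<^sup>2 - (Im s - Im z)\<^sup>2 \<le> _\<close> s in auto)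
    qed
  qed
qed

lemma quadratic_decay_absorbs_linear:
  fixes \<tau> C P a b d e :: real
  assumes "0 < \<tau>" "\<tau> \<le> C" "0 \<le> P" "P \<le> d" "4 * e\<^sup>2 \<le> P\<^sup>2" "8 * C * b \<le> P"
    "a \<le> P\<^sup>2 / (8 * C)"
  shows "a + b * d + (e\<^sup>2 - d\<^sup>2) / \<tau> \<le> - (d\<^sup>2 / (2 * \<tau>))"
proof -
  have C: "0 < C" using assms(1,2) by linarith
  have Pd: "P\<^sup>2 \<le> d\<^sup>2" using assms(3,4) by (intro power_mono) auto
  have "(e\<^sup>2 - d\<^sup>2) / \<tau> + d\<^sup>2 / (2 * \<tau>) = (e\<^sup>2 - d\<^sup>2 / 2) / \<tau>"
    using assms(1) by (simp add: field_simps)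
  also have "\<dots> \<le> - (d\<^sup>2 / 4) / \<tau>"
    using assms(1,5) Pd by (intro divide_right_mono) auto
  also have "\<dots> \<le> - (d\<^sup>2 / (4 * C))"
  proof -
    have "d\<^sup>2 / (4 * C) \<le> d\<^sup>2 / (4 * \<tau>)"
      using assms(1,2) by (intro divide_left_mono) auto
    then show ?thesis by simp
  qed
  finally have gauss: "(e\<^sup>2 - d\<^sup>2) / \<tau> + d\<^sup>2 / (2 * \<tau>) \<le> - (d\<^sup>2 / (4 * C))" .
  have "b \<le> d / (8 * C)" using assms(4,6) C by (simp add: field_simps)
  then have "b * d \<le> d / (8 * C) * d" using assms(3,4) by (intro mult_right_mono) auto
  moreover have "a \<le> d\<^sup>2 / (8 * C)"
    using assms(7) Pd C by (smt (verit) divide_right_mono mult_pos_pos)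
  ultimately show ?thesis
    using gauss by (simp add: power2_eq_square field_simps)
qed

lemma norm_integrand_le_on_line_two_at:
  assumes gamma: "norm (gamma_factor \<alpha> m Q k \<omega> \<mu> z) \<le> exp (c + b * norm z)" "0 \<le> b"
    and t: "t < 0" "\<bar>t\<bar> \<le> C" and n: "1 \<le> n" and z: "Re z = 2" and s: "0 \<le> Im s"
    and L: "norm (J_shift Q k \<omega> s) \<le> L" "0 \<le> L"
    and u: "\<bar>Re s - 2\<bar> \<le> u" "4 * u\<^sup>2 \<le> P\<^sup>2"
    and P: "0 \<le> P" "P \<le> \<bar>Im s - Im z\<bar>" "8 * C * (b + L) \<le> P"
      "c + b * (2 + Im s) + u * L + C * L\<^sup>2 / 4 \<le> P\<^sup>2 / (8 * C)"
  shows "norm (integrand \<alpha> m Q k \<omega> \<mu> t s n z) \<le> exp (- ((Im s - Im z)\<^sup>2 / (2 * \<bar>t\<bar>)))"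
proof -
  define a where "a = c + b * (2 + Im s)"
  define d where "d = \<bar>Im s - Im z\<bar>"
  have "norm z \<le> 2 + Im s + d" using cmod_le[of z] z s by (simp add: d_def)
  then have "c + b * norm z \<le> a + b * d"
    using mult_left_mono[OF _ gamma(2)] by (fastforce simp: a_def algebra_simps)
  then have gamma: "norm (gamma_factor \<alpha> m Q k \<omega> \<mu> z) \<le> exp (a + b * d)"
    using gamma(1) by (simp add: order_trans)
  have "norm (s - z) * L \<le> (u + d) * L"
    using cmod_le[of "s - z"] u(1) z L(2) by (intro mult_right_mono) (auto simp: d_def)
  moreover have "\<bar>t\<bar> * L\<^sup>2 / 4 \<le> C * L\<^sup>2 / 4"
    using t by (intro divide_right_mono mult_right_mono) auto
  moreover have "0 \<le> Re z * ln n" using z n by simp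
  moreover have "((Re s - Re z)\<^sup>2 - (Im s - Im z)\<^sup>2) / \<bar>t\<bar> = ((Re s - 2)\<^sup>2 - d\<^sup>2) / \<bar>t\<bar>"
    using z by (simp add: d_def)
  moreover have "(a + u * L + C * L\<^sup>2 / 4) + (b + L) * d + ((Re s - 2)\<^sup>2 - d\<^sup>2) / \<bar>t\<bar>
      \<le> - (d\<^sup>2 / (2 * \<bar>t\<bar>))"
    using t u P power_mono[OF u(1), of 2]
    by (intro quadratic_decay_absorbs_linear[where P = P and C = C]) (auto simp: a_def d_def)
  ultimately have "a + b * d + (((Re s - Re z)\<^sup>2 - (Im s - Im z)\<^sup>2) / \<bar>t\<bar> + norm (s - z) * L +
      \<bar>t\<bar> * L\<^sup>2 / 4 - Re z * ln n) \<le> - (d\<^sup>2 / (2 * \<bar>t\<bar>))"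
    using mult.commute[of L d] by (simp only: distrib_right)
  then have "exp (a + b * d) * exp (((Re s - Re z)\<^sup>2 - (Im s - Im z)\<^sup>2) / \<bar>t\<bar> + norm (s - z) * L +
      \<bar>t\<bar> * L\<^sup>2 / 4 - Re z * ln n) \<le> exp (- ((Im s - Im z)\<^sup>2 / (2 * \<bar>t\<bar>)))"
    by (simp add: d_def exp_add[symmetric])
  moreover have "norm (integrand \<alpha> m Q k \<omega> \<mu> t s n z) \<le> exp (a + b * d) *
      exp (((Re s - Re z)\<^sup>2 - (Im s - Im z)\<^sup>2) / \<bar>t\<bar> + norm (s - z) * L + \<bar>t\<bar> * L\<^sup>2 / 4 - Re z * ln n)"
    using norm_integrand_le[OF t(1) _ L(1), of n \<alpha> m \<mu> z] n gamma
    by (simp add: d_def) (meson exp_gt_zero less_imp_le mult_right_mono order_trans)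
  ultimately show ?thesis by linarith
qed

lemma norm_integrand_le_on_line_two:
  assumes "0 < Q" "\<forall>i<k. 0 < \<omega> i \<and> 0 \<le> Re (\<mu> i)" "0 < C"
  shows "\<forall>\<^sub>F y in at_top. \<forall>t s n z. t < 0 \<and> \<bar>t\<bar> \<le> C \<and> Im s = y \<and> \<bar>Re s\<bar> \<le> C * y powr (1/4) \<and>
    1 \<le> n \<and> Re z = 2 \<and> y powr (2/3) \<le> \<bar>y - Im z\<bar> \<longrightarrow>
    norm (integrand \<alpha> m Q k \<omega> \<mu> t s n z) \<le> exp (- ((y - Im z)\<^sup>2 / (2 * \<bar>t\<bar>)))"
proof -
  obtain c where c:
    "\<And>z. Re z = 2 \<Longrightarrow> norm (gamma_factor \<alpha> m Q k \<omega> \<mu> z) \<le> exp (c + 2 * real m * norm z)"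
    using norm_gamma_factor_le_exp_on_vertical_line[OF assms(1,2), of 2] by auto
  have "\<forall>\<^sub>F y in at_top. 4 * (C * y powr (1/4) + 2)\<^sup>2 \<le> (y powr (2/3))\<^sup>2"
    using assms(3) by real_asymp
  moreover have "\<forall>\<^sub>F y in at_top. 8 * C * (2 * real m + y powr (1/3)) \<le> y powr (2/3)"
    using assms(3) by real_asymp
  moreover have "\<forall>\<^sub>F y in at_top. c + 2 * real m * (2 + y) + (C * y powr (1/4) + 2) * y powr (1/3)
      + C * (y powr (1/3))\<^sup>2 / 4 \<le> (y powr (2/3))\<^sup>2 / (8 * C)"
    using assms(3) by real_asymp
  moreover have "\<forall>\<^sub>F y in at_top. \<forall>s. Im s = y \<and> \<bar>Re s\<bar> \<le> C * y powr (1/4) \<longrightarrow>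
      norm (J_shift Q k \<omega> s) \<le> y powr (1/3)"
    using assms by (intro norm_J_shift_le_eventually) auto
  moreover have "\<forall>\<^sub>F y in at_top. (0::real) \<le> y" by (rule eventually_ge_at_top)
  ultimately show ?thesis
  proof eventually_elim
    case (elim y)
    show ?case
    proof (intro allI impI, elim conjE)
      fix t :: real and s :: complex and n :: nat and z :: complex
      assume H: "t < 0" "\<bar>t\<bar> \<le> C" "Im s = y" "\<bar>Re s\<bar> \<le> C * y powr (1/4)" "1 \<le> n"
        "Re z = 2" "y powr (2/3) \<le> \<bar>y - Im z\<bar>"
      have "norm (integrand \<alpha> m Q k \<omega> \<mu> t s n z) \<le> exp (- ((Im s - Im z)\<^sup>2 / (2 * \<bar>t\<bar>)))"
      proof (rule norm_integrand_le_on_line_two_at[OF c[OF H(6)], where u = "C * y powr (1/4) + 2"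
            and P = "y powr (2/3)" and L = "y powr (1/3)" and C = C])
        show "norm (J_shift Q k \<omega> s) \<le> y powr (1/3)" using elim(4) H(3,4) by blast
        show "\<bar>Re s - 2\<bar> \<le> C * y powr (1/4) + 2" using H(4) by arith
        show "y powr (2/3) \<le> \<bar>Im s - Im z\<bar>" using H(3,7) by simp
      qed (use H(1-3,5,6) elim(1-3,5) in simp_all)
      with H(3) show "norm (integrand \<alpha> m Q k \<omega> \<mu> t s n z) \<le> exp (- ((y - Im z)\<^sup>2 / (2 * \<bar>t\<bar>)))"
        by simp
    qed
  qed
qed

theorem mainTheorem14:
  fixes F :: "complex \<Rightarrow> complex" and a :: "nat \<Rightarrow> complex" and m :: nat
    and \<alpha> :: complex and Q :: real and k :: nat
    and \<omega> :: "nat \<Rightarrow> real" and \<mu> :: "nat \<Rightarrow> complex" and C :: real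
  assumes "selberg_sharp F a m \<alpha> Q k \<omega> \<mu>"
    and "C > 0"
  shows "\<exists>y0 K. y0 > 0 \<and> K > 0 \<and>
    (\<forall>t s n. t < 0 \<and> \<bar>t\<bar> \<le> C \<and> Im s \<ge> y0 \<and> \<bar>Re s\<bar> \<le> C * Im s powr (1/4) \<and>
       1 \<le> n \<and> real n \<le> exp (Im s powr (3/5) / \<bar>t\<bar>) \<longrightarrow>
       (\<forall>z. \<bar>Re s - Re z\<bar> \<le> Im s powr (3/5) \<and>
            Im s powr (2/3) / 2 \<le> \<bar>Im s - Im z\<bar> \<and> \<bar>Im s - Im z\<bar> \<le> 2 * Im s powr (2/3) \<longrightarrow>
            norm (integrand \<alpha> m Q k \<omega> \<mu> t s n z)
              \<le> K * exp (- (Im s powr (4/3) / (10 * \<bar>t\<bar>)))) \<and>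
       (\<forall>z. Re z = 2 \<and> \<bar>Im s - Im z\<bar> \<ge> Im s powr (2/3) \<longrightarrow>
            norm (integrand \<alpha> m Q k \<omega> \<mu> t s n z)
              \<le> K * exp (- ((Im s - Im z)\<^sup>2 / (2 * \<bar>t\<bar>)))))"
proof -
  have Q: "0 < Q" and \<omega>\<mu>: "\<forall>i<k. 0 < \<omega> i \<and> 0 \<le> Re (\<mu> i)"
    using assms(1) unfolding selberg_sharp_def by blast+
  have "\<forall>\<^sub>F y in at_top.
      (\<forall>t s n z. t < 0 \<and> \<bar>t\<bar> \<le> C \<and> Im s = y \<and> \<bar>Re s\<bar> \<le> C * y powr (1/4) \<and>
        1 \<le> n \<and> real n \<le> exp (y powr (3/5) / \<bar>t\<bar>) \<and> \<bar>Re s - Re z\<bar> \<le> y powr (3/5) \<and>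
        y powr (2/3) / 2 \<le> \<bar>y - Im z\<bar> \<and> \<bar>y - Im z\<bar> \<le> 2 * y powr (2/3) \<longrightarrow>
        norm (integrand \<alpha> m Q k \<omega> \<mu> t s n z) \<le> exp (- (y powr (4/3) / (10 * \<bar>t\<bar>)))) \<and>
      (\<forall>t s n z. t < 0 \<and> \<bar>t\<bar> \<le> C \<and> Im s = y \<and> \<bar>Re s\<bar> \<le> C * y powr (1/4) \<and>
        1 \<le> n \<and> Re z = 2 \<and> y powr (2/3) \<le> \<bar>y - Im z\<bar> \<longrightarrow>
        norm (integrand \<alpha> m Q k \<omega> \<mu> t s n z) \<le> exp (- ((y - Im z)\<^sup>2 / (2 * \<bar>t\<bar>))))"
    (is "eventually ?P at_top")
    using norm_integrand_le_near_saddle[OF Q _ assms(2)] norm_integrand_le_on_line_two[OF Q \<omega>\<mu> assms(2)]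
      \<omega>\<mu> by (intro eventually_conj) auto
  then obtain Y where Y: "\<And>y. Y \<le> y \<Longrightarrow> ?P y"
    unfolding eventually_at_top_linorder by blast
  show ?thesis
    by (intro exI[of _ "max Y 1"] exI[of _ "1::real"] conjI allI impI) (use Y in \<open>auto simp: abs_minus_commute\<close>)
qed

end
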